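(* Let $\mathcal{O}$ be a complete discrete valuation ring of characteristic zero whose residue field $k$ has characteristic $p>0$. Let $G$ be a finite group, $N$ a normal subgroup of $G$, and $b$ a block of $\mathcal{O}N$ which is $G$-invariant. Put $A=\mathcal{O}Gb$ and $A_1=\mathcal{O}Nb$, both regarded as $G$-algebras via conjugation. Then for any subgroup $H$ of $G$ and any point $\hat{\alpha}$ of $H$ on $A$, there exist a point $\alpha$ of $H$ on $A_1$, an idempotent $\hat{i}\in\hat{\alpha}$ and an idempotent $j\in\alpha$ such that $\hat{i}\,j=j\,\hat{i}=\hat{i}$.
   Context: For a $G$-algebra $B$ (an $\mathcal{O}$-algebra with an action of $G$ by algebra automorphisms) and a subgroup $H\le G$, $B^H$ denotes the subalgebra of $H$-fixed elements. A point of $H$ on $B$ is a conjugacy class, under the unit group $(B^H)^{*}$, of primitive idempotents of $B^H$. Here $A=\mathcal{O}Gb$ is graded by $G/N$ with identity component $A_1=\mathcal{O}Nb$, and $G$ acts on both by conjugation. *)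

theory Defs
  imports "HOL-Algebra.Algebra"
begin

definition dvr_uniformizer :: "'o::idom \<Rightarrow> bool" where
  "dvr_uniformizer \<pi> \<longleftrightarrow> \<pi> \<noteq> 0 \<and> \<not> \<pi> dvd 1 \<and>
     (\<forall>x. x \<noteq> 0 \<longrightarrow> (\<exists>u n. u dvd 1 \<and> x = u * \<pi> ^ n))"

definition pi_adically_complete :: "'o::idom \<Rightarrow> bool" where
  "pi_adically_complete \<pi> \<longleftrightarrow>
     (\<forall>x::nat \<Rightarrow> 'o. (\<forall>n. \<pi> ^ n dvd (x (Suc n) - x n)) \<longrightarrow>
        (\<exists>l. \<forall>n. \<pi> ^ n dvd (l - x n)))"

text \<open>Elements of OG are coefficient functions vanishing outside the carrier.\<close>
definition galg :: "('g,'m) monoid_scheme \<Rightarrow> ('g \<Rightarrow> 'o::comm_ring_1) set" where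
  "galg G = {x. \<forall>g. g \<notin> carrier G \<longrightarrow> x g = 0}"

definition galg_on :: "'g set \<Rightarrow> ('g \<Rightarrow> 'o::comm_ring_1) set" where
  "galg_on N = {x. \<forall>g. g \<notin> N \<longrightarrow> x g = 0}"

definition galg_mult :: "('g,'m) monoid_scheme \<Rightarrow> ('g \<Rightarrow> 'o::comm_ring_1) \<Rightarrow> ('g \<Rightarrow> 'o) \<Rightarrow> ('g \<Rightarrow> 'o)" where
  "galg_mult G x y = (\<lambda>g. if g \<in> carrier G
      then (\<Sum>h\<in>carrier G. x h * y (inv\<^bsub>G\<^esub> h \<otimes>\<^bsub>G\<^esub> g)) else 0)"

text \<open>Conjugation action: gconj G g x = g x g^{-1}.\<close>
definition gconj :: "('g,'m) monoid_scheme \<Rightarrow> 'g \<Rightarrow> ('g \<Rightarrow> 'o::comm_ring_1) \<Rightarrow> ('g \<Rightarrow> 'o)" where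
  "gconj G g x = (\<lambda>y. if y \<in> carrier G then x (inv\<^bsub>G\<^esub> g \<otimes>\<^bsub>G\<^esub> y \<otimes>\<^bsub>G\<^esub> g) else 0)"

definition galg_idem :: "('g,'m) monoid_scheme \<Rightarrow> ('g \<Rightarrow> 'o::comm_ring_1) \<Rightarrow> bool" where
  "galg_idem G e \<longleftrightarrow> galg_mult G e e = e"

definition prim_idem :: "('g,'m) monoid_scheme \<Rightarrow> ('g \<Rightarrow> 'o::comm_ring_1) set \<Rightarrow> ('g \<Rightarrow> 'o) \<Rightarrow> bool" where
  "prim_idem G R e \<longleftrightarrow> e \<in> R \<and> galg_idem G e \<and> e \<noteq> (\<lambda>_. 0) \<and>
     \<not> (\<exists>e1\<in>R. \<exists>e2\<in>R. galg_idem G e1 \<and> galg_idem G e2 \<and> e1 \<noteq> (\<lambda>_. 0) \<and> e2 \<noteq> (\<lambda>_. 0) \<and>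
          galg_mult G e1 e2 = (\<lambda>_. 0) \<and> galg_mult G e2 e1 = (\<lambda>_. 0) \<and> e = (\<lambda>g. e1 g + e2 g))"

definition center_of :: "('g,'m) monoid_scheme \<Rightarrow> ('g \<Rightarrow> 'o::comm_ring_1) set \<Rightarrow> ('g \<Rightarrow> 'o) set" where
  "center_of G R = {z \<in> R. \<forall>x\<in>R. galg_mult G z x = galg_mult G x z}"

definition is_block :: "('g,'m) monoid_scheme \<Rightarrow> 'g set \<Rightarrow> ('g \<Rightarrow> 'o::comm_ring_1) \<Rightarrow> bool" where
  "is_block G N b \<longleftrightarrow> prim_idem G (center_of G (galg_on N)) b"

definition fixed_pts :: "('g,'m) monoid_scheme \<Rightarrow> 'g set \<Rightarrow> ('g \<Rightarrow> 'o::comm_ring_1) set \<Rightarrow> ('g \<Rightarrow> 'o) set" where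
  "fixed_pts G H B = {a \<in> B. \<forall>h\<in>H. gconj G h a = a}"

text \<open>Points of H on B (B has identity element unit_el): conjugacy classes under the unit
  group of B^H of primitive idempotents of B^H.\<close>
definition points :: "('g,'m) monoid_scheme \<Rightarrow> 'g set \<Rightarrow> ('g \<Rightarrow> 'o::comm_ring_1) set \<Rightarrow> ('g \<Rightarrow> 'o) \<Rightarrow> ('g \<Rightarrow> 'o) set set" where
  "points G H B unit_el = {P. \<exists>e. prim_idem G (fixed_pts G H B) e \<and>
      P = {galg_mult G (galg_mult G u e) v | u v.
             u \<in> fixed_pts G H B \<and> v \<in> fixed_pts G H B \<and>
             galg_mult G u v = unit_el \<and> galg_mult G v u = unit_el}}"

end

theory Submission
  imports Defs "HOL-Library.Function_Algebras"
begin

(* Let e be a primitive idempotent of A^H in the point, and j a nonzero idempotent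
  of A_1^H with j e = e j = e up to conjugacy (initially j = b).  If j is not primitive in
  A_1^H, write j = j1 + j2.  Since e is primitive and O is complete, e A^H e is a local
  ring (Fitting's lemma modulo pi plus lifting of idempotents), so one of e j1 e, e j2 e
  is a unit there, and then a conjugate of e lies below j1 or j2.  Refining in this way
  produces a growing family of orthogonal idempotents of OG; there are at most |G| of
  them, so the process ends at a primitive idempotent of A_1^H.  Only the completeness of O
  enters. *)

definition divisible_pow :: "'o::idom \<Rightarrow> nat \<Rightarrow> ('g \<Rightarrow> 'o) \<Rightarrow> bool" where
  "divisible_pow \<pi> n x \<longleftrightarrow> (\<forall>g. \<pi> ^ n dvd x g)"

definition scale :: "'o::comm_ring_1 \<Rightarrow> ('g \<Rightarrow> 'o) \<Rightarrow> ('g \<Rightarrow> 'o)" where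
  "scale c x = (\<lambda>g. c * x g)"

lemma scale_apply [simp]: "scale c x g = c * x g"
  by (simp add: scale_def)

lemma sum_fun_apply: "(\<Sum>k\<in>K. f k) x = (\<Sum>k\<in>K. f k x)"
  by (induction K rule: infinite_finite_induct) auto

lemma divisible_pow_add: "divisible_pow p n x \<Longrightarrow> divisible_pow p n y \<Longrightarrow> divisible_pow p n (x + y)"
  by (simp add: divisible_pow_def)

lemma divisible_pow_diff: "divisible_pow p n x \<Longrightarrow> divisible_pow p n y \<Longrightarrow> divisible_pow p n (x - y)"
  by (simp add: divisible_pow_def)

lemma divisible_pow_uminus: "divisible_pow p n x \<Longrightarrow> divisible_pow p n (- x)"
  by (simp add: divisible_pow_def)

lemma divisible_pow_zero [simp]: "divisible_pow p n 0"
  by (simp add: divisible_pow_def)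

lemma divisible_pow_0 [simp]: "divisible_pow p 0 x"
  by (simp add: divisible_pow_def)

lemma divisible_pow_scale: "divisible_pow p n x \<Longrightarrow> divisible_pow p n (scale c x)"
  by (simp add: divisible_pow_def)

lemma divisible_pow_mono: "m \<le> n \<Longrightarrow> divisible_pow p n x \<Longrightarrow> divisible_pow p m x"
  unfolding divisible_pow_def by (meson dvd_trans le_imp_power_dvd)

lemma divisible_pow_diff_commute: "divisible_pow p n (x - y) \<Longrightarrow> divisible_pow p n (y - x)"
  unfolding divisible_pow_def by (metis dvd_minus_iff minus_apply minus_diff_eq)

lemma not_dvd_uniformizer_if_unit: "dvr_uniformizer \<pi> \<Longrightarrow> a dvd 1 \<Longrightarrow> \<not> \<pi> dvd a"
  using dvd_trans unfolding dvr_uniformizer_def by blast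

lemma unit_if_not_dvd_uniformizer:
  assumes u: "dvr_uniformizer \<pi>" and nd: "\<not> \<pi> dvd a"
  shows "a dvd 1"
proof -
  obtain v k where v: "v dvd 1" "a = v * \<pi> ^ k"
    using u nd unfolding dvr_uniformizer_def by (metis dvd_0_right)
  have "k = 0"
    using nd v by (metis dvd_mult dvd_power gr_zeroI)
  then show ?thesis using v by simp
qed

lemma divisible_pow_all_imp_zero:
  assumes u: "dvr_uniformizer \<pi>" and d: "\<And>n. divisible_pow \<pi> n x"
  shows "x = 0"
proof
  fix g
  show "x g = 0 g"
  proof (rule ccontr)
    assume "x g \<noteq> 0 g"
    then obtain v k where v: "v dvd 1" "x g = v * \<pi> ^ k"
      using u unfolding dvr_uniformizer_def by auto
    have "\<pi> ^ Suc k dvd v * \<pi> ^ k"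
      using d[of "Suc k"] v unfolding divisible_pow_def by metis
    then have "\<pi> * \<pi> ^ k dvd v * \<pi> ^ k" by simp
    moreover have "\<pi> \<noteq> 0" using u unfolding dvr_uniformizer_def by simp
    ultimately have "\<pi> dvd v" by simp
    then show False using u v(1) not_dvd_uniformizer_if_unit by blast
  qed
qed

context group begin

lemma inv_mult_cancel: "x \<in> carrier G \<Longrightarrow> y \<in> carrier G \<Longrightarrow> inv x \<otimes> (x \<otimes> y) = y"
  by (simp add: m_assoc[symmetric])

lemma mult_inv_cancel: "x \<in> carrier G \<Longrightarrow> y \<in> carrier G \<Longrightarrow> x \<otimes> (inv x \<otimes> y) = y"
  by (simp add: m_assoc[symmetric])

lemmas group_cancel_simps = m_assoc inv_mult_group inv_mult_cancel mult_inv_cancel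

lemma galg_mult_in_galg: "galg_mult G x y \<in> galg G"
  by (simp add: galg_mult_def galg_def)

lemma galg_mult_outside: "g \<notin> carrier G \<Longrightarrow> galg_mult G x y g = 0"
  by (simp add: galg_mult_def)

lemma galg_mult_apply:
  "g \<in> carrier G \<Longrightarrow> galg_mult G x y g = (\<Sum>h\<in>carrier G. x h * y (inv h \<otimes> g))"
  by (simp add: galg_mult_def)

lemma galg_mult_assoc:
  assumes fin: "finite (carrier G)"
  shows "galg_mult G (galg_mult G x y) z = galg_mult G x (galg_mult G y z)"
proof
  fix g
  show "galg_mult G (galg_mult G x y) z g = galg_mult G x (galg_mult G y z) g"
  proof (cases "g \<in> carrier G")
    case False then show ?thesis by (simp add: galg_mult_outside)
  next
    case g: True
    have shift: "(\<Sum>h\<in>carrier G. y (inv k \<otimes> h) * z (inv h \<otimes> g))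
        = (\<Sum>m\<in>carrier G. y m * z (inv m \<otimes> (inv k \<otimes> g)))" if k: "k \<in> carrier G" for k
      by (rule sum.reindex_bij_witness[where i="\<lambda>m. k \<otimes> m" and j="\<lambda>h. inv k \<otimes> h"])
         (use k g in \<open>simp_all add: group_cancel_simps\<close>)
    have "galg_mult G (galg_mult G x y) z g
        = (\<Sum>h\<in>carrier G. (\<Sum>k\<in>carrier G. x k * y (inv k \<otimes> h)) * z (inv h \<otimes> g))"
      using g by (simp add: galg_mult_apply)
    also have "\<dots> = (\<Sum>k\<in>carrier G. \<Sum>h\<in>carrier G. x k * (y (inv k \<otimes> h) * z (inv h \<otimes> g)))"
      by (subst sum.swap) (simp add: sum_distrib_right mult.assoc)
    also have "\<dots> = (\<Sum>k\<in>carrier G. x k * (\<Sum>m\<in>carrier G. y m * z (inv m \<otimes> (inv k \<otimes> g))))"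
      by (rule sum.cong[OF refl]) (simp only: sum_distrib_left[symmetric] shift)
    also have "\<dots> = galg_mult G x (galg_mult G y z) g"
      using g by (simp add: galg_mult_apply)
    finally show ?thesis .
  qed
qed

lemma galg_mult_add_left: "galg_mult G (x + y) z = galg_mult G x z + galg_mult G y z"
  by (rule ext) (simp add: galg_mult_def sum.distrib distrib_right)

lemma galg_mult_add_right: "galg_mult G z (x + y) = galg_mult G z x + galg_mult G z y"
  by (rule ext) (simp add: galg_mult_def sum.distrib distrib_left)

lemma galg_mult_uminus_left: "galg_mult G (- x) z = - galg_mult G x z"
  by (rule ext) (simp add: galg_mult_def sum_negf)

lemma galg_mult_uminus_right: "galg_mult G z (- x) = - galg_mult G z x"
  by (rule ext) (simp add: galg_mult_def sum_negf)

lemma galg_mult_diff_left: "galg_mult G (x - y) z = galg_mult G x z - galg_mult G y z"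
  by (rule ext) (simp add: galg_mult_def sum_subtractf left_diff_distrib)

lemma galg_mult_diff_right: "galg_mult G z (x - y) = galg_mult G z x - galg_mult G z y"
  by (rule ext) (simp add: galg_mult_def sum_subtractf right_diff_distrib)

lemma galg_mult_scale_left: "galg_mult G (scale c x) z = scale c (galg_mult G x z)"
  by (rule ext) (simp add: galg_mult_def sum_distrib_left mult.assoc)

lemma galg_mult_scale_right: "galg_mult G z (scale c x) = scale c (galg_mult G z x)"
  by (rule ext) (simp add: galg_mult_def sum_distrib_left mult.left_commute)

lemma galg_mult_zero_left [simp]: "galg_mult G 0 z = 0"
  by (rule ext) (simp add: galg_mult_def)

lemma galg_mult_zero_right [simp]: "galg_mult G z 0 = 0"
  by (rule ext) (simp add: galg_mult_def)

lemma galg_mult_zero_fun_left [simp]: "galg_mult G (\<lambda>_. 0) z = 0"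
  by (rule ext) (simp add: galg_mult_def)

lemma galg_mult_zero_fun_right [simp]: "galg_mult G z (\<lambda>_. 0) = 0"
  by (rule ext) (simp add: galg_mult_def)

lemma galg_mult_sum_left: "galg_mult G (\<Sum>k\<in>K. f k) z = (\<Sum>k\<in>K. galg_mult G (f k) z)"
proof (induction K rule: infinite_finite_induct)
  case (insert x F)
  then show ?case by (simp only: sum.insert[OF insert(1,2)] galg_mult_add_left insert(3))
qed simp_all

lemma galg_mult_sum_right: "galg_mult G z (\<Sum>k\<in>K. f k) = (\<Sum>k\<in>K. galg_mult G z (f k))"
proof (induction K rule: infinite_finite_induct)
  case (insert x F)
  then show ?case by (simp only: sum.insert[OF insert(1,2)] galg_mult_add_right insert(3))
qed simp_all

lemma divisible_pow_galg_mult_left: "divisible_pow p n x \<Longrightarrow> divisible_pow p n (galg_mult G x y)"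
  unfolding divisible_pow_def galg_mult_def by (auto intro!: dvd_sum)

lemma divisible_pow_galg_mult_right: "divisible_pow p n x \<Longrightarrow> divisible_pow p n (galg_mult G y x)"
  unfolding divisible_pow_def galg_mult_def by (auto intro!: dvd_sum)

lemma divisible_pow_galg_mult:
  assumes x: "divisible_pow p m x" and y: "divisible_pow p n y"
  shows "divisible_pow p (m + n) (galg_mult G x y)"
proof -
  have "p ^ (m + n) dvd x h * y k" for h k
    unfolding power_add by (rule mult_dvd_mono) (use x y in \<open>auto simp: divisible_pow_def\<close>)
  then show ?thesis
    unfolding divisible_pow_def galg_mult_def by (auto intro!: dvd_sum)
qed

lemma gconj_apply: "y \<in> carrier G \<Longrightarrow> gconj G h x y = x (inv h \<otimes> y \<otimes> h)"
  by (simp add: gconj_def)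

lemma gconj_add: "gconj G h (x + y) = gconj G h x + gconj G h y"
  by (rule ext) (simp add: gconj_def)

lemma gconj_diff: "gconj G h (x - y) = gconj G h x - gconj G h y"
  by (rule ext) (simp add: gconj_def)

lemma gconj_uminus: "gconj G h (- x) = - gconj G h x"
  by (rule ext) (simp add: gconj_def)

lemma gconj_scale: "gconj G h (scale c x) = scale c (gconj G h x)"
  by (rule ext) (simp add: gconj_def)

lemma gconj_zero [simp]: "gconj G h 0 = 0"
  by (rule ext) (simp add: gconj_def)

lemma divisible_pow_gconj: "divisible_pow p n x \<Longrightarrow> divisible_pow p n (gconj G h x)"
  unfolding divisible_pow_def gconj_def by auto

lemma gconj_galg_mult:
  assumes h: "h \<in> carrier G"
  shows "gconj G h (galg_mult G x y) = galg_mult G (gconj G h x) (gconj G h y)"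
proof
  fix g
  show "gconj G h (galg_mult G x y) g = galg_mult G (gconj G h x) (gconj G h y) g"
  proof (cases "g \<in> carrier G")
    case False then show ?thesis by (simp add: galg_mult_outside gconj_def)
  next
    case g: True
    have "gconj G h (galg_mult G x y) g = (\<Sum>k\<in>carrier G. x k * y (inv k \<otimes> (inv h \<otimes> g \<otimes> h)))"
      using g h by (simp add: gconj_apply galg_mult_apply)
    also have "\<dots> = (\<Sum>k\<in>carrier G. x (inv h \<otimes> k \<otimes> h) * y (inv h \<otimes> (inv k \<otimes> g) \<otimes> h))"
      by (rule sum.reindex_bij_witness[where i="\<lambda>k. inv h \<otimes> k \<otimes> h" and j="\<lambda>m. h \<otimes> m \<otimes> inv h"])
         (use g h in \<open>simp_all add: group_cancel_simps\<close>)
    also have "\<dots> = galg_mult G (gconj G h x) (gconj G h y) g"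
      using g h by (simp add: galg_mult_apply gconj_apply)
    finally show ?thesis .
  qed
qed

lemma galg_mult_commute_if_invariant:
  assumes inv: "\<forall>g\<in>carrier G. gconj G g b = b"
  shows "galg_mult G b x = galg_mult G x b"
proof
  fix g
  show "galg_mult G b x g = galg_mult G x b g"
  proof (cases "g \<in> carrier G")
    case False then show ?thesis by (simp add: galg_mult_outside)
  next
    case g: True
    have b_swap: "b (g \<otimes> inv m) = b (inv m \<otimes> g)" if m: "m \<in> carrier G" for m
    proof -
      have "b (g \<otimes> inv m) = b (inv g \<otimes> (g \<otimes> inv m) \<otimes> g)"
        using inv g m by (metis gconj_apply inv_closed m_closed)
      then show ?thesis using g m by (simp add: group_cancel_simps)
    qed
    have "galg_mult G b x g = (\<Sum>h\<in>carrier G. b h * x (inv h \<otimes> g))"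
      using g by (simp add: galg_mult_apply)
    also have "\<dots> = (\<Sum>m\<in>carrier G. b (g \<otimes> inv m) * x m)"
      by (rule sum.reindex_bij_witness[where i="\<lambda>m. g \<otimes> inv m" and j="\<lambda>h. inv h \<otimes> g"])
         (use g in \<open>simp_all add: group_cancel_simps\<close>)
    also have "\<dots> = galg_mult G x b g"
      using g by (simp add: galg_mult_apply b_swap mult.commute)
    finally show ?thesis .
  qed
qed

lemma galg_on_subset_galg: "subgroup N G \<Longrightarrow> galg_on N \<subseteq> galg G"
  unfolding galg_on_def galg_def using subgroup.subset by blast

end

lemma prim_idem_iff:
  "prim_idem G S e \<longleftrightarrow> e \<in> S \<and> galg_mult G e e = e \<and> e \<noteq> 0 \<and>
     \<not> (\<exists>e1\<in>S. \<exists>e2\<in>S. galg_mult G e1 e1 = e1 \<and> galg_mult G e2 e2 = e2 \<and> e1 \<noteq> 0 \<and> e2 \<noteq> 0 \<and>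
          galg_mult G e1 e2 = 0 \<and> galg_mult G e2 e1 = 0 \<and> e = e1 + e2)"
  by (simp add: prim_idem_def galg_idem_def zero_fun_def plus_fun_def)

lemma prim_idemD:
  assumes "prim_idem G S e"
  shows "e \<in> S" "galg_mult G e e = e" "e \<noteq> 0"
  using assms by (simp_all add: prim_idem_iff)

context ring begin

lemma Units_if_left_right_inverse:
  assumes "x \<in> carrier R" "l \<in> carrier R" "r \<in> carrier R" "l \<otimes> x = \<one>" "x \<otimes> r = \<one>"
  shows "x \<in> Units R"
  using assms inv_unique[of l x r] unfolding Units_def by auto

lemma Units_one_minus_commute:
  assumes a: "a \<in> carrier R" and b: "b \<in> carrier R" and U: "\<one> \<ominus> a \<otimes> b \<in> Units R"
  shows "\<one> \<ominus> b \<otimes> a \<in> Units R"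
proof -
  obtain z where z: "z \<in> carrier R" "(\<one> \<ominus> a \<otimes> b) \<otimes> z = \<one>" "z \<otimes> (\<one> \<ominus> a \<otimes> b) = \<one>"
    using U unfolding Units_def by blast
  \<comment> \<open>the inverse is 1 + b z a\<close>
  have "(\<one> \<ominus> b \<otimes> a) \<otimes> (\<one> \<oplus> b \<otimes> z \<otimes> a) = \<one> \<ominus> b \<otimes> a \<oplus> b \<otimes> ((\<one> \<ominus> a \<otimes> b) \<otimes> z) \<otimes> a"
    using a b z(1) by (simp add: ring_simprules)
  then have r: "(\<one> \<ominus> b \<otimes> a) \<otimes> (\<one> \<oplus> b \<otimes> z \<otimes> a) = \<one>"
    unfolding z(2) using a b z(1) by (simp add: ring_simprules)
  have "(\<one> \<oplus> b \<otimes> z \<otimes> a) \<otimes> (\<one> \<ominus> b \<otimes> a) = \<one> \<ominus> b \<otimes> a \<oplus> b \<otimes> (z \<otimes> (\<one> \<ominus> a \<otimes> b)) \<otimes> a"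
    using a b z(1) by (simp add: ring_simprules)
  then have l: "(\<one> \<oplus> b \<otimes> z \<otimes> a) \<otimes> (\<one> \<ominus> b \<otimes> a) = \<one>"
    unfolding z(3) using a b z(1) by (simp add: ring_simprules)
  show ?thesis
    by (rule Units_if_left_right_inverse[OF _ _ _ l r]) (use a b z(1) in simp_all)
qed

lemma Units_complement_plus_corner_unit:
  assumes e: "e \<in> carrier R" and x: "x \<in> carrier R" and y: "y \<in> carrier R"
    and ee: "e \<otimes> e = e" and ex: "e \<otimes> x = x" and xe: "x \<otimes> e = x"
    and ey: "e \<otimes> y = y" and ye: "y \<otimes> e = y" and xy: "x \<otimes> y = e" and yx: "y \<otimes> x = e"
  shows "\<one> \<ominus> e \<oplus> x \<in> Units R"
proof -
  have "(\<one> \<ominus> e \<oplus> x) \<otimes> (\<one> \<ominus> e \<oplus> y)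
      = \<one> \<ominus> e \<ominus> e \<oplus> e \<otimes> e \<oplus> y \<ominus> e \<otimes> y \<oplus> x \<ominus> x \<otimes> e \<oplus> x \<otimes> y"
    using e x y by (simp add: ring_simprules; algebra)
  then have r: "(\<one> \<ominus> e \<oplus> x) \<otimes> (\<one> \<ominus> e \<oplus> y) = \<one>"
    using e x y by (simp add: ee ey xe xy ring_simprules; algebra)
  have "(\<one> \<ominus> e \<oplus> y) \<otimes> (\<one> \<ominus> e \<oplus> x)
      = \<one> \<ominus> e \<ominus> e \<oplus> e \<otimes> e \<oplus> x \<ominus> e \<otimes> x \<oplus> y \<ominus> y \<otimes> e \<oplus> y \<otimes> x"
    using e x y by (simp add: ring_simprules; algebra)
  then have l: "(\<one> \<ominus> e \<oplus> y) \<otimes> (\<one> \<ominus> e \<oplus> x) = \<one>"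
    using e x y by (simp add: ee ex ye yx ring_simprules; algebra)
  show ?thesis
    by (rule Units_if_left_right_inverse[OF _ _ _ l r]) (use e x y in simp_all)
qed

lemma idempotent_conjugate_below_if_absorbed:
  assumes f: "f \<in> carrier R" and j: "j \<in> carrier R"
    and ff: "f \<otimes> f = f" and jj: "j \<otimes> j = j" and jf: "j \<otimes> f = f"
  shows "\<exists>u\<in>carrier R. \<exists>v\<in>carrier R. u \<otimes> v = \<one> \<and> v \<otimes> u = \<one> \<and>
           j \<otimes> (u \<otimes> f \<otimes> v) = u \<otimes> f \<otimes> v \<and> (u \<otimes> f \<otimes> v) \<otimes> j = u \<otimes> f \<otimes> v"
proof -
  define g where "g = f \<otimes> j"
  have g: "g \<in> carrier R" unfolding g_def using f j by simp
  have fg: "f \<otimes> g = g" unfolding g_def using f j ff by (simp add: m_assoc[symmetric])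
  have gf: "g \<otimes> f = f" unfolding g_def using f j jf ff by (simp add: m_assoc)
  have "g \<otimes> g = (g \<otimes> f) \<otimes> j" unfolding g_def using f j by (simp add: m_assoc)
  then have gg: "g \<otimes> g = g" using gf by (simp add: g_def)
  have gj: "g \<otimes> j = g" unfolding g_def using f j jj by (simp add: m_assoc)
  have jg: "j \<otimes> g = g" unfolding g_def using f j jf by (simp add: m_assoc[symmetric])
  \<comment> \<open>f and g absorb each other, so 1 + f - g conjugates f to g\<close>
  define u where "u = \<one> \<oplus> f \<ominus> g"
  define v where "v = \<one> \<ominus> f \<oplus> g"
  have uv_in: "u \<in> carrier R" "v \<in> carrier R" unfolding u_def v_def using f g by auto
  have "u \<otimes> v = \<one> \<oplus> f \<otimes> g \<ominus> g \<ominus> f \<otimes> f \<oplus> g \<otimes> f \<ominus> g \<otimes> g \<oplus> g"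
    unfolding u_def v_def using f g by (simp add: ring_simprules; algebra)
  then have uv: "u \<otimes> v = \<one>" using f g by (simp add: fg gf ff gg ring_simprules; algebra)
  have "v \<otimes> u = \<one> \<oplus> f \<ominus> g \<ominus> f \<ominus> f \<otimes> f \<oplus> f \<otimes> g \<oplus> g \<oplus> g \<otimes> f \<ominus> g \<otimes> g"
    unfolding u_def v_def using f g by (simp add: ring_simprules; algebra)
  then have vu: "v \<otimes> u = \<one>" using f g by (simp add: fg gf ff gg ring_simprules; algebra)
  have "u \<otimes> f \<otimes> v = (f \<oplus> f \<otimes> f \<ominus> g \<otimes> f) \<ominus> (f \<oplus> f \<otimes> f \<ominus> g \<otimes> f) \<otimes> f
                        \<oplus> (f \<oplus> f \<otimes> f \<ominus> g \<otimes> f) \<otimes> g"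
    unfolding u_def v_def using f g by (simp add: ring_simprules; algebra)
  then have "u \<otimes> f \<otimes> v = g" using f g by (simp add: fg gf ff ring_simprules; algebra)
  then show ?thesis using uv_in uv vu jg gj by metis
qed

lemma mult_eq_minus_if_sum_mult_eq:
  assumes "a \<in> carrier R" "b \<in> carrier R" "e \<in> carrier R" and "(a \<oplus> b) \<otimes> e = e"
  shows "a \<otimes> e = e \<ominus> b \<otimes> e"
proof -
  have "a \<otimes> e \<oplus> b \<otimes> e = e" using assms by (simp add: l_distr)
  then show ?thesis
    using assms(1-3) by (metis add.m_closed minus_equality m_closed r_neg r_neg1 a_minus_def
        add.inv_closed a_assoc a_comm)
qed

lemma Units_one_minus_summand:
  assumes e: "e \<in> carrier R" and j1: "j1 \<in> carrier R" and j2: "j2 \<in> carrier R"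
    and y: "y \<in> carrier R" and ee: "e \<otimes> e = e" and sum_e: "(j1 \<oplus> j2) \<otimes> e = e"
    and ey: "e \<otimes> y = y" and ye: "y \<otimes> e = y"
    and xy: "(e \<otimes> j1 \<otimes> e) \<otimes> y = e" and yx: "y \<otimes> (e \<otimes> j1 \<otimes> e) = e"
  shows "\<one> \<ominus> j2 \<otimes> e \<in> Units R"
proof -
  define x where "x = e \<otimes> j1 \<otimes> e"
  have x: "x \<in> carrier R" using e j1 unfolding x_def by simp
  have "e \<otimes> (j1 \<otimes> e) = e \<otimes> e \<ominus> e \<otimes> j2 \<otimes> e"
    unfolding mult_eq_minus_if_sum_mult_eq[OF j1 j2 e sum_e] using e j1 j2
    by (simp add: ring_simprules)
  then have "x = e \<ominus> e \<otimes> j2 \<otimes> e" unfolding x_def using e j1 ee by (simp add: m_assoc)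
  then have "\<one> \<ominus> (e \<otimes> j2) \<otimes> e = \<one> \<ominus> e \<oplus> x" using e j2 x by (simp add: ring_simprules; algebra)
  moreover have "\<one> \<ominus> e \<oplus> x \<in> Units R"
    by (rule Units_complement_plus_corner_unit[OF e x y ee _ _ ey ye xy[folded x_def] yx[folded x_def]])
       (use e j1 ee in \<open>simp add: x_def m_assoc[symmetric], simp add: x_def m_assoc\<close>)
  ultimately have "\<one> \<ominus> (e \<otimes> j2) \<otimes> e \<in> Units R" by simp
  then have "\<one> \<ominus> e \<otimes> (e \<otimes> j2) \<in> Units R" by (rule Units_one_minus_commute[rotated 2]) (use e j2 in simp_all)
  then have "\<one> \<ominus> e \<otimes> j2 \<in> Units R" using e j2 ee by (simp add: m_assoc[symmetric])
  then show ?thesis by (rule Units_one_minus_commute[OF e j2])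
qed

lemma conjugate_idempotent_below:
  assumes e: "e \<in> carrier R" and j1: "j1 \<in> carrier R" and j2: "j2 \<in> carrier R"
    and y: "y \<in> carrier R" and ee: "e \<otimes> e = e" and jj1: "j1 \<otimes> j1 = j1"
    and sum_e: "(j1 \<oplus> j2) \<otimes> e = e" and ey: "e \<otimes> y = y" and ye: "y \<otimes> e = y"
    and xy: "(e \<otimes> j1 \<otimes> e) \<otimes> y = e" and yx: "y \<otimes> (e \<otimes> j1 \<otimes> e) = e"
  shows "\<exists>u\<in>carrier R. \<exists>v\<in>carrier R. u \<otimes> v = \<one> \<and> v \<otimes> u = \<one> \<and>
            j1 \<otimes> (u \<otimes> e \<otimes> v) = u \<otimes> e \<otimes> v \<and> (u \<otimes> e \<otimes> v) \<otimes> j1 = u \<otimes> e \<otimes> v"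
proof -
  have "\<one> \<ominus> j2 \<otimes> e \<in> Units R"
    by (rule Units_one_minus_summand[OF e j1 j2 y ee sum_e ey ye xy yx])
  \<comment> \<open>conjugating by W turns e into an idempotent f with j1 f = f\<close>
  then obtain W W' where W: "W \<in> carrier R" "W' \<in> carrier R" "W \<otimes> W' = \<one>" "W' \<otimes> W = \<one>"
      and W_def: "W = \<one> \<ominus> j2 \<otimes> e"
    by (metis Units_closed Units_inv_closed Units_r_inv Units_l_inv)
  have We: "W \<otimes> e = j1 \<otimes> e"
    unfolding W_def mult_eq_minus_if_sum_mult_eq[OF j1 j2 e sum_e] using e j2 ee
    by (simp add: ring_simprules)
  define f where "f = W \<otimes> e \<otimes> W'"
  have f: "f \<in> carrier R" unfolding f_def using W e by simp
  have j1f: "j1 \<otimes> f = f"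
    unfolding f_def We using j1 e W jj1 by (simp add: m_assoc[symmetric])
  have ff: "f \<otimes> f = f"
  proof -
    have "W' \<otimes> (W \<otimes> (e \<otimes> W')) = e \<otimes> W'" using W e by (simp add: m_assoc[symmetric])
    moreover have "e \<otimes> (e \<otimes> W') = e \<otimes> W'" using W e ee by (simp add: m_assoc[symmetric])
    moreover have "f \<otimes> f = W \<otimes> (e \<otimes> (W' \<otimes> (W \<otimes> (e \<otimes> W'))))"
      unfolding f_def using W e by (simp add: m_assoc)
    ultimately show ?thesis unfolding f_def using W e by (simp add: m_assoc)
  qed
  obtain u v where uv: "u \<in> carrier R" "v \<in> carrier R" "u \<otimes> v = \<one>" "v \<otimes> u = \<one>"
      and below: "j1 \<otimes> (u \<otimes> f \<otimes> v) = u \<otimes> f \<otimes> v" "(u \<otimes> f \<otimes> v) \<otimes> j1 = u \<otimes> f \<otimes> v"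
    using idempotent_conjugate_below_if_absorbed[OF f j1 ff jj1 j1f] by blast
  have "(u \<otimes> W) \<otimes> e \<otimes> (W' \<otimes> v) = u \<otimes> f \<otimes> v"
    unfolding f_def using uv W e by (simp add: m_assoc)
  moreover have "(u \<otimes> W) \<otimes> (W' \<otimes> v) = \<one>"
  proof -
    have "W \<otimes> (W' \<otimes> v) = v" using W uv by (simp add: m_assoc[symmetric])
    then show ?thesis using uv W by (simp add: m_assoc)
  qed
  moreover have "(W' \<otimes> v) \<otimes> (u \<otimes> W) = \<one>"
  proof -
    have "v \<otimes> (u \<otimes> W) = W" using W uv by (simp add: m_assoc[symmetric])
    then show ?thesis using uv W by (simp add: m_assoc)
  qed
  moreover have "u \<otimes> W \<in> carrier R" "W' \<otimes> v \<in> carrier R" using uv W by auto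
  ultimately show ?thesis using below by metis
qed

lemma idempotent_lifting_identities:
  assumes y: "y \<in> carrier R"
  shows "(y \<otimes> y \<oplus> y \<otimes> y \<oplus> y \<otimes> y \<ominus> y \<otimes> (y \<otimes> y) \<ominus> y \<otimes> (y \<otimes> y)) \<ominus> y
           = (y \<otimes> y \<ominus> y) \<otimes> (\<one> \<ominus> y \<ominus> y)"
    and "(y \<otimes> y \<oplus> y \<otimes> y \<oplus> y \<otimes> y \<ominus> y \<otimes> (y \<otimes> y) \<ominus> y \<otimes> (y \<otimes> y)) \<otimes>
         (y \<otimes> y \<oplus> y \<otimes> y \<oplus> y \<otimes> y \<ominus> y \<otimes> (y \<otimes> y) \<ominus> y \<otimes> (y \<otimes> y))
         \<ominus> (y \<otimes> y \<oplus> y \<otimes> y \<oplus> y \<otimes> y \<ominus> y \<otimes> (y \<otimes> y) \<ominus> y \<otimes> (y \<otimes> y))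
           = ((y \<otimes> y \<ominus> y) \<otimes> (y \<otimes> y \<ominus> y)) \<otimes>
             ((y \<otimes> y \<ominus> y) \<oplus> (y \<otimes> y \<ominus> y) \<oplus> (y \<otimes> y \<ominus> y) \<oplus> (y \<otimes> y \<ominus> y) \<ominus> \<one> \<ominus> \<one> \<ominus> \<one>)"
  using y by (simp add: ring_simprules)+

end

section \<open>Linear relations and orthogonal idempotents\<close>

lemma sum_eliminate_coordinate:
  fixes v :: "'k \<Rightarrow> 'g \<Rightarrow> 'o::comm_ring_1"
  assumes "finite K" "p \<in> K"
  shows "(\<Sum>k\<in>K. (if k = p then - (\<Sum>k\<in>K - {p}. c k * v k i) else c k * v p i) * v k g)
         = (\<Sum>k\<in>K - {p}. c k * (v p i * v k g - v k i * v p g))"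
proof -
  have "(\<Sum>k\<in>K. (if k = p then - (\<Sum>k\<in>K - {p}. c k * v k i) else c k * v p i) * v k g)
      = - (\<Sum>k\<in>K - {p}. c k * v k i * v p g) + (\<Sum>k\<in>K - {p}. c k * v p i * v k g)"
    using assms by (simp add: sum.remove sum_distrib_right)
  then show ?thesis by (simp add: sum_subtractf[symmetric] algebra_simps)
qed

lemma nontrivial_relation_if_card_less:
  fixes v :: "'k \<Rightarrow> 'g \<Rightarrow> 'o::idom"
  assumes "finite I" "finite K" "card I < card K"
  shows "\<exists>c. (\<exists>k\<in>K. c k \<noteq> 0) \<and> (\<forall>g\<in>I. (\<Sum>k\<in>K. c k * v k g) = 0)"
  using assms
proof (induction I arbitrary: K v rule: finite_induct)
  case empty
  then obtain k where "k \<in> K" by (metis card.empty card_gt_0_iff ex_in_conv)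
  then show ?case by (intro exI[where x="\<lambda>_. 1"]) auto
next
  case (insert i I)
  show ?case
  proof (cases "\<forall>k\<in>K. v k i = 0")
    case True
    have "card I < card K" using insert by simp
    then obtain c where c: "\<exists>k\<in>K. c k \<noteq> 0" "\<forall>g\<in>I. (\<Sum>k\<in>K. c k * v k g) = 0"
      using insert.IH[OF insert.prems(1)] by blast
    then show ?thesis using True by (intro exI[where x=c]) auto
  next
    case False
    then obtain p where p: "p \<in> K" "v p i \<noteq> 0" by blast
    \<comment> \<open>eliminate the coordinate i using the vector v p\<close>
    define K' where "K' = K - {p}"
    define w where "w k g = v p i * v k g - v k i * v p g" for k g
    have fK': "finite K'" using insert by (simp add: K'_def)
    have "card K' = card K - 1" using p insert by (simp add: K'_def)
    then have cK': "card I < card K'" using insert by simp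
    obtain c' where c': "\<exists>k\<in>K'. c' k \<noteq> 0" "\<forall>g\<in>I. (\<Sum>k\<in>K'. c' k * w k g) = 0"
      using insert.IH[OF fK' cK', of w] by blast
    define c where "c k = (if k = p then - (\<Sum>k\<in>K'. c' k * v k i) else c' k * v p i)" for k
    have key: "(\<Sum>k\<in>K. c k * v k g) = (\<Sum>k\<in>K'. c' k * w k g)" for g
      unfolding c_def w_def K'_def by (rule sum_eliminate_coordinate[OF insert.prems(1) p(1)])
    have "\<exists>k\<in>K. c k \<noteq> 0"
    proof -
      obtain k where k: "k \<in> K'" "c' k \<noteq> 0" using c' by blast
      then have "k \<in> K" "k \<noteq> p" by (auto simp: K'_def)
      then show ?thesis using k p by (intro bexI[where x=k]) (auto simp: c_def)
    qed
    moreover have "\<forall>g\<in>insert i I. (\<Sum>k\<in>K. c k * v k g) = 0"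
      unfolding key using c'(2) by (auto simp: w_def)
    ultimately show ?thesis by blast
  qed
qed

lemma primitive_relation:
  fixes v :: "'k \<Rightarrow> 'g \<Rightarrow> 'o::idom"
  assumes u: "dvr_uniformizer \<pi>" and k0: "k0 \<in> K" "c k0 \<noteq> 0"
    and rel: "\<forall>g. (\<Sum>k\<in>K. c k * v k g) = 0"
  shows "\<exists>c'. (\<exists>k\<in>K. \<not> \<pi> dvd c' k) \<and> (\<forall>g. (\<Sum>k\<in>K. c' k * v k g) = 0)"
proof -
  obtain a j where a: "a dvd 1" "c k0 = a * \<pi> ^ j"
    using u k0 unfolding dvr_uniformizer_def by blast
  have pz: "\<pi> \<noteq> 0" using u unfolding dvr_uniformizer_def by simp
  from a(2) rel show ?thesis
  proof (induction j arbitrary: c)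
    case 0
    then have "\<not> \<pi> dvd c k0" using not_dvd_uniformizer_if_unit[OF u a(1)] by simp
    then show ?case using 0 k0(1) by blast
  next
    case (Suc j)
    show ?case
    proof (cases "\<exists>k\<in>K. \<not> \<pi> dvd c k")
      case True then show ?thesis using Suc.prems(2) by blast
    next
      case False
      then have "\<forall>k\<in>K. \<exists>y. c k = \<pi> * y" by (auto elim!: dvdE)
      then obtain c' where c': "\<And>k. k \<in> K \<Longrightarrow> c k = \<pi> * c' k"
        by (auto dest!: bchoice)
      have "\<pi> * (\<Sum>k\<in>K. c' k * v k g) = (\<Sum>k\<in>K. c k * v k g)" for g
        by (simp add: sum_distrib_left c' mult.assoc)
      then have "\<forall>g. (\<Sum>k\<in>K. c' k * v k g) = 0" using Suc.prems(2) pz by simp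
      moreover have "c' k0 = a * \<pi> ^ j"
        using c'[OF k0(1)] Suc.prems(1) pz by (simp add: ac_simps)
      ultimately show ?thesis using Suc.IH by blast
    qed
  qed
qed

definition orthogonal_idems :: "('g,'m) monoid_scheme \<Rightarrow> ('g \<Rightarrow> 'o::comm_ring_1) set \<Rightarrow> bool" where
  "orthogonal_idems G F \<longleftrightarrow> (\<forall>f\<in>F. galg_mult G f f = f \<and> f \<noteq> 0) \<and>
     (\<forall>f\<in>F. \<forall>g\<in>F. f \<noteq> g \<longrightarrow> galg_mult G f g = 0)"

context group begin

lemma card_orthogonal_idems_le:
  fixes F :: "('a \<Rightarrow> 'c::idom) set"
  assumes fin: "finite (carrier G)" and F: "finite F" "F \<subseteq> galg G"
    and orth: "orthogonal_idems G F"
  shows "card F \<le> card (carrier G)"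
proof (rule ccontr)
  assume "\<not> card F \<le> card (carrier G)"
  then have "card (carrier G) < card F" by simp
  then obtain c where c: "\<exists>k\<in>F. c k \<noteq> 0" "\<forall>g\<in>carrier G. (\<Sum>k\<in>F. c k * k g) = 0"
    using nontrivial_relation_if_card_less[OF fin F(1), of "\<lambda>k. k"] by blast
  obtain f0 where f0: "f0 \<in> F" "c f0 \<noteq> 0" using c(1) by blast
  have "(\<Sum>k\<in>F. scale (c k) k) = 0"
  proof
    fix g
    show "(\<Sum>k\<in>F. scale (c k) k) g = 0 g"
      using c(2) F(2) by (cases "g \<in> carrier G") (auto simp: sum_fun_apply galg_def intro!: sum.neutral)
  qed
  \<comment> \<open>multiplying the relation by f0 isolates its f0-term\<close>
  then have "0 = galg_mult G (\<Sum>k\<in>F. scale (c k) k) f0" by simp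
  also have "\<dots> = (\<Sum>k\<in>F. scale (c k) (galg_mult G k f0))"
    by (simp add: galg_mult_sum_left galg_mult_scale_left)
  also have "\<dots> = scale (c f0) (galg_mult G f0 f0)"
    by (rule sum.mono_neutral_right[where S="{f0}", simplified])
       (use F f0 orth in \<open>auto simp: orthogonal_idems_def scale_def fun_eq_iff\<close>)
  also have "\<dots> = scale (c f0) f0" using orth f0 by (simp add: orthogonal_idems_def)
  finally have "f0 = 0" using f0(2) by (auto simp: fun_eq_iff)
  then show False using orth f0 by (auto simp: orthogonal_idems_def)
qed

lemma orthogonal_idems_split:
  assumes fin: "finite (carrier G)" and orth: "orthogonal_idems G F" and j: "j \<in> F"
    and j1: "galg_mult G j1 j1 = j1" "j1 \<noteq> 0" and j2: "galg_mult G j2 j2 = j2" "j2 \<noteq> 0"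
    and j12: "galg_mult G j1 j2 = 0" "galg_mult G j2 j1 = 0" and sum: "j = j1 + j2"
  shows "orthogonal_idems G (insert j1 (insert j2 (F - {j})))"
    and "j1 \<notin> F - {j}" and "j2 \<notin> F - {j}" and "j1 \<noteq> j2"
proof -
  have absorb: "galg_mult G j1 j = j1" "galg_mult G j j1 = j1" "galg_mult G j2 j = j2" "galg_mult G j j2 = j2"
    unfolding sum using j1 j2 j12 by (simp_all add: galg_mult_add_left galg_mult_add_right)
  have orth_rest: "galg_mult G jk f = 0 \<and> galg_mult G f jk = 0"
    if f: "f \<in> F - {j}" and jk: "jk \<in> {j1, j2}" for f jk
  proof -
    have "galg_mult G j f = 0" "galg_mult G f j = 0" using orth f j by (auto simp: orthogonal_idems_def)
    moreover have "galg_mult G jk j = jk" "galg_mult G j jk = jk" using jk absorb by auto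
    ultimately show ?thesis
      by (metis galg_mult_assoc[OF fin] galg_mult_zero_left galg_mult_zero_right)
  qed
  show "j1 \<notin> F - {j}" using orth_rest[of j1 j1] j1 by auto
  show "j2 \<notin> F - {j}" using orth_rest[of j2 j2] j2 by auto
  show "j1 \<noteq> j2" using j1 j12 by auto
  show "orthogonal_idems G (insert j1 (insert j2 (F - {j})))"
    using orth j1 j2 j12 orth_rest unfolding orthogonal_idems_def by auto
qed

end

section \<open>Fixed-point corners of the group algebra\<close>

definition corner :: "('g,'m) monoid_scheme \<Rightarrow> 'g set \<Rightarrow> ('g \<Rightarrow> 'o::comm_ring_1) \<Rightarrow> ('g \<Rightarrow> 'o) set" where
  "corner G H e = {x \<in> galg G. (\<forall>h\<in>H. gconj G h x = x) \<and> galg_mult G e x = x \<and> galg_mult G x e = x}"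

definition galg_ring :: "('g,'m) monoid_scheme \<Rightarrow> ('g \<Rightarrow> 'o::comm_ring_1) set \<Rightarrow> ('g \<Rightarrow> 'o) \<Rightarrow> ('g \<Rightarrow> 'o) ring" where
  "galg_ring G S e = \<lparr>carrier = S, monoid.mult = galg_mult G, monoid.one = e, ring.zero = 0, ring.add = (+)\<rparr>"

lemma galg_ring_simps [simp]:
  "carrier (galg_ring G S e) = S" "monoid.mult (galg_ring G S e) = galg_mult G"
  "monoid.one (galg_ring G S e) = e" "ring.zero (galg_ring G S e) = 0" "ring.add (galg_ring G S e) = (+)"
  by (simp_all add: galg_ring_def)

fun cpow :: "('g,'m) monoid_scheme \<Rightarrow> ('g \<Rightarrow> 'o::comm_ring_1) \<Rightarrow> ('g \<Rightarrow> 'o) \<Rightarrow> nat \<Rightarrow> ('g \<Rightarrow> 'o)" where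
  "cpow G e d 0 = e"
| "cpow G e d (Suc n) = galg_mult G d (cpow G e d n)"

locale corner_algebra = group G for G (structure) +
  fixes H :: "'a set" and e :: "'a \<Rightarrow> 'o::idom" and \<pi> :: 'o
  assumes finite_carrier: "finite (carrier G)" and subgroup_H: "subgroup H G"
    and e_galg: "e \<in> galg G" and e_idem: "galg_mult G e e = e" and e_fixed: "\<forall>h\<in>H. gconj G h e = e"
    and uniformizer: "dvr_uniformizer \<pi>" and complete: "pi_adically_complete \<pi>"
begin

abbreviation "C \<equiv> corner G H e"
abbreviation "M \<equiv> galg_mult G"
abbreviation "R \<equiv> galg_ring G C e"

lemma M_assoc: "M (M x y) z = M x (M y z)"
  by (rule galg_mult_assoc[OF finite_carrier])

lemma corner_galg: "x \<in> C \<Longrightarrow> x \<in> galg G" by (simp add: corner_def)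
lemma corner_fixed: "x \<in> C \<Longrightarrow> h \<in> H \<Longrightarrow> gconj G h x = x" by (simp add: corner_def)
lemma unit_left: "x \<in> C \<Longrightarrow> M e x = x" by (simp add: corner_def)
lemma unit_right: "x \<in> C \<Longrightarrow> M x e = x" by (simp add: corner_def)
lemma corner_outside: "x \<in> C \<Longrightarrow> g \<notin> carrier G \<Longrightarrow> x g = 0" by (simp add: corner_def galg_def)

lemma unit_in_corner: "e \<in> C"
  using e_galg e_idem e_fixed by (simp add: corner_def)

lemma zero_in_corner: "0 \<in> C"
  by (simp add: corner_def galg_def)

lemma corner_add: "x \<in> C \<Longrightarrow> y \<in> C \<Longrightarrow> x + y \<in> C"
  by (simp add: corner_def galg_def gconj_add galg_mult_add_left galg_mult_add_right)

lemma corner_diff: "x \<in> C \<Longrightarrow> y \<in> C \<Longrightarrow> x - y \<in> C"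
  by (simp add: corner_def galg_def gconj_diff galg_mult_diff_left galg_mult_diff_right)

lemma corner_uminus: "x \<in> C \<Longrightarrow> - x \<in> C"
  by (simp add: corner_def galg_def gconj_uminus galg_mult_uminus_left galg_mult_uminus_right)

lemma corner_scale: "x \<in> C \<Longrightarrow> scale c x \<in> C"
  by (simp add: corner_def galg_def gconj_scale galg_mult_scale_left galg_mult_scale_right)

lemma corner_mult:
  assumes x: "x \<in> C" and y: "y \<in> C" shows "M x y \<in> C"
proof -
  have "M e (M x y) = M x y" using x by (simp add: M_assoc[symmetric] unit_left)
  moreover have "M (M x y) e = M x y" using y by (simp add: M_assoc unit_right)
  moreover have "\<forall>h\<in>H. gconj G h (M x y) = M x y"
    using x y subgroup.subset[OF subgroup_H] by (auto simp: gconj_galg_mult corner_fixed)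
  ultimately show ?thesis using galg_mult_in_galg by (simp add: corner_def)
qed

lemma corner_sum: "(\<And>k. k \<in> K \<Longrightarrow> f k \<in> C) \<Longrightarrow> (\<Sum>k\<in>K. f k) \<in> C"
  by (induction K rule: infinite_finite_induct) (auto simp: zero_in_corner corner_add)

lemma ring_corner: "ring R"
proof (rule ringI)
  show "abelian_group R"
  proof (rule abelian_groupI)
    fix x assume x: "x \<in> carrier R"
    show "\<exists>y\<in>carrier R. y \<oplus>\<^bsub>R\<^esub> x = \<zero>\<^bsub>R\<^esub>"
      by (rule bexI[where x="- x"]) (use x in \<open>simp_all add: corner_uminus\<close>)
  qed (auto simp: corner_add zero_in_corner add.assoc add.commute)
  show "monoid R"
    by (rule monoidI) (auto simp: corner_mult unit_in_corner M_assoc unit_left unit_right)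
qed (auto simp: galg_mult_add_left galg_mult_add_right)

sublocale CR: ring R by (rule ring_corner)

lemma corner_a_minus: "x \<in> C \<Longrightarrow> y \<in> C \<Longrightarrow> x \<ominus>\<^bsub>R\<^esub> y = x - y"
proof -
  assume x: "x \<in> C" and y: "y \<in> C"
  have "\<ominus>\<^bsub>R\<^esub> y = - y" by (rule CR.minus_equality) (use y in \<open>auto simp: corner_uminus\<close>)
  then show ?thesis by (simp add: a_minus_def)
qed

lemma corner_Units_iff: "x \<in> Units R \<longleftrightarrow> x \<in> C \<and> (\<exists>y\<in>C. M y x = e \<and> M x y = e)"
  by (simp add: Units_def)

lemma eq_if_divisible_all: "(\<And>n. divisible_pow \<pi> n (x - y)) \<Longrightarrow> x = y"
  using divisible_pow_all_imp_zero[OF uniformizer] by fastforce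

lemma corner_complete:
  assumes z: "\<And>n. z n \<in> C" and cauchy: "\<And>n. divisible_pow \<pi> n (z (Suc n) - z n)"
  obtains l where "l \<in> C" "\<And>n. divisible_pow \<pi> n (l - z n)"
proof -
  have "\<exists>l. \<forall>n. \<pi> ^ n dvd (l - z n g)" for g
    using complete cauchy unfolding pi_adically_complete_def divisible_pow_def by simp
  then obtain L where L: "\<And>g n. \<pi> ^ n dvd (L g - z n g)" by metis
  define l where "l = (\<lambda>g. if g \<in> carrier G then L g else 0)"
  have l_lim: "divisible_pow \<pi> n (l - z n)" for n
    unfolding divisible_pow_def l_def using L corner_outside[OF z] by auto
  \<comment> \<open>the defining identities of C pass to the limit, as they hold modulo every power of pi\<close>
  have "gconj G h l = l" if h: "h \<in> H" for h
  proof (rule eq_if_divisible_all)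
    fix n
    have "gconj G h l - l = gconj G h (l - z n) - (l - z n)"
      using corner_fixed[OF z h] by (simp add: gconj_diff algebra_simps)
    then show "divisible_pow \<pi> n (gconj G h l - l)"
      by (simp only:) (intro divisible_pow_diff divisible_pow_gconj l_lim)
  qed
  moreover have "M e l = l"
  proof (rule eq_if_divisible_all)
    fix n
    have "M e l - l = M e (l - z n) - (l - z n)"
      using unit_left[OF z] by (simp add: galg_mult_diff_right algebra_simps)
    then show "divisible_pow \<pi> n (M e l - l)"
      by (simp only:) (intro divisible_pow_diff divisible_pow_galg_mult_right l_lim)
  qed
  moreover have "M l e = l"
  proof (rule eq_if_divisible_all)
    fix n
    have "M l e - l = M (l - z n) e - (l - z n)"
      using unit_right[OF z] by (simp add: galg_mult_diff_left algebra_simps)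
    then show "divisible_pow \<pi> n (M l e - l)"
      by (simp only:) (intro divisible_pow_diff divisible_pow_galg_mult_left l_lim)
  qed
  moreover have "l \<in> galg G" by (simp add: l_def galg_def)
  ultimately have "l \<in> C" by (simp add: corner_def)
  then show ?thesis using that l_lim by blast
qed

lemma cpow_in_corner: "d \<in> C \<Longrightarrow> cpow G e d n \<in> C"
  by (induction n) (auto simp: unit_in_corner corner_mult)

lemma cpow_commute:
  "d \<in> C \<Longrightarrow> x \<in> C \<Longrightarrow> M d x = M x d \<Longrightarrow> M (cpow G e d n) x = M x (cpow G e d n)"
proof (induction n)
  case 0 then show ?case by (simp add: unit_left unit_right)
next
  case (Suc n) then show ?case by (simp add: M_assoc) (simp flip: M_assoc)
qed

lemma divisible_pow_cpow: "d \<in> C \<Longrightarrow> divisible_pow \<pi> 1 d \<Longrightarrow> divisible_pow \<pi> n (cpow G e d n)"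
proof (induction n)
  case (Suc n) then show ?case using divisible_pow_galg_mult[of \<pi> 1 d n "cpow G e d n"] by simp
qed simp

lemma cpow_add: "d \<in> C \<Longrightarrow> M (cpow G e d a) (cpow G e d b) = cpow G e d (a + b)"
  by (induction a) (auto simp: unit_left cpow_in_corner M_assoc)

lemma cpow_mult_distrib:
  assumes x: "x \<in> C" and y: "y \<in> C" and xy: "M x y = M y x"
  shows "cpow G e (M x y) n = M (cpow G e x n) (cpow G e y n)"
proof (induction n)
  case 0 then show ?case by (simp add: e_idem)
next
  case (Suc n)
  have c: "M y (cpow G e x n) = M (cpow G e x n) y" using cpow_commute[OF x y xy] by simp
  have "cpow G e (M x y) (Suc n) = M x (M y (M (cpow G e x n) (cpow G e y n)))"
    by (simp only: cpow.simps Suc M_assoc)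
  also have "\<dots> = M x (M (cpow G e x n) (M y (cpow G e y n)))" by (simp flip: M_assoc add: c)
  finally show ?case by (simp add: M_assoc)
qed

lemma geometric_sum:
  assumes s: "s \<in> C"
  shows "M (e - s) (\<Sum>k<n. cpow G e s k) = e - cpow G e s n"
    and "M (\<Sum>k<n. cpow G e s k) (e - s) = e - cpow G e s n"
proof -
  have sc: "M (cpow G e s k) s = M s (cpow G e s k)" for k by (rule cpow_commute) (use s in auto)
  show "M (e - s) (\<Sum>k<n. cpow G e s k) = e - cpow G e s n"
  proof (induction n)
    case (Suc n)
    have "M (e - s) (\<Sum>k<Suc n. cpow G e s k)
        = M (e - s) (\<Sum>k<n. cpow G e s k) + M (e - s) (cpow G e s n)"
      by (simp add: galg_mult_add_right)
    also have "\<dots> = (e - cpow G e s n) + (cpow G e s n - cpow G e s (Suc n))"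
      by (simp only: Suc.IH) (simp add: galg_mult_diff_left unit_left cpow_in_corner s fun_eq_iff)
    also have "\<dots> = e - cpow G e s (Suc n)" by simp
    finally show ?case .
  qed simp
  show "M (\<Sum>k<n. cpow G e s k) (e - s) = e - cpow G e s n"
  proof (induction n)
    case (Suc n)
    have "M (\<Sum>k<Suc n. cpow G e s k) (e - s)
        = M (\<Sum>k<n. cpow G e s k) (e - s) + M (cpow G e s n) (e - s)"
      by (simp add: galg_mult_add_left)
    also have "\<dots> = (e - cpow G e s n) + (cpow G e s n - cpow G e s (Suc n))"
      by (simp only: Suc.IH) (simp add: galg_mult_diff_right unit_right cpow_in_corner s sc fun_eq_iff)
    also have "\<dots> = e - cpow G e s (Suc n)" by simp
    finally show ?case .
  qed simp
qed

lemma geometric_sum_in_corner: "s \<in> C \<Longrightarrow> (\<Sum>k<n. cpow G e s k) \<in> C"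
  by (rule corner_sum) (rule cpow_in_corner)

lemma unit_add_divisible:
  assumes d: "d \<in> C" and dv: "divisible_pow \<pi> 1 d"
  shows "e + d \<in> Units R"
proof -
  \<comment> \<open>the inverse is the pi-adic limit of the partial sums of the geometric series in - d\<close>
  have md: "- d \<in> C" "divisible_pow \<pi> 1 (- d)" using d dv by (auto simp: corner_uminus divisible_pow_uminus)
  define z where "z n = (\<Sum>k<n. cpow G e (- d) k)" for n
  have ed: "e - - d = e + d" by simp
  have zl: "M (e + d) (z n) = e - cpow G e (- d) n"
   and zr: "M (z n) (e + d) = e - cpow G e (- d) n" for n
    using geometric_sum[OF md(1), of n] unfolding z_def ed by simp_all
  have small: "divisible_pow \<pi> n (cpow G e (- d) n)" for n by (rule divisible_pow_cpow[OF md])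
  obtain L where L: "L \<in> C" "\<And>n. divisible_pow \<pi> n (L - z n)"
    by (rule corner_complete[of z]) (simp_all add: z_def geometric_sum_in_corner md small)
  have "M (e + d) L = e"
  proof (rule eq_if_divisible_all)
    fix n
    have "M (e + d) L - e = M (e + d) (L - z n) - cpow G e (- d) n"
      using zl[of n] by (simp add: galg_mult_diff_right)
    then show "divisible_pow \<pi> n (M (e + d) L - e)"
      by (simp only:) (intro divisible_pow_diff divisible_pow_galg_mult_right L(2) small)
  qed
  moreover have "M L (e + d) = e"
  proof (rule eq_if_divisible_all)
    fix n
    have "M L (e + d) - e = M (L - z n) (e + d) - cpow G e (- d) n"
      using zr[of n] by (simp add: galg_mult_diff_left)
    then show "divisible_pow \<pi> n (M L (e + d) - e)"
      by (simp only:) (intro divisible_pow_diff divisible_pow_galg_mult_left L(2) small)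
  qed
  ultimately show ?thesis using L(1) d by (auto simp: corner_Units_iff corner_add unit_in_corner)
qed

lemma unit_if_unit_mod_pi:
  assumes s: "s \<in> C" and t: "t \<in> C"
    and st: "divisible_pow \<pi> 1 (M s t - e)" and ts: "divisible_pow \<pi> 1 (M t s - e)"
  shows "s \<in> Units R"
proof -
  have "e + (M s t - e) \<in> Units R"
    by (rule unit_add_divisible) (use s t st in \<open>auto simp: corner_diff corner_mult unit_in_corner\<close>)
  then obtain r where r: "r \<in> C" "M (M s t) r = e" by (auto simp: corner_Units_iff)
  have "e + (M t s - e) \<in> Units R"
    by (rule unit_add_divisible) (use s t ts in \<open>auto simp: corner_diff corner_mult unit_in_corner\<close>)
  then obtain l where l: "l \<in> C" "M l (M t s) = e" by (auto simp: corner_Units_iff)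
  show ?thesis
    by (rule CR.Units_if_left_right_inverse[where l="M l t" and r="M t r"])
       (use s t r l in \<open>auto simp: corner_mult M_assoc\<close>)
qed

lemma unit_if_nilpotent_mod_pi:
  assumes s: "s \<in> C" and nil: "divisible_pow \<pi> 1 (cpow G e s a)"
  shows "e - s \<in> Units R"
  by (rule unit_if_unit_mod_pi[where t="\<Sum>k<a. cpow G e s k"])
     (use s nil in \<open>simp_all add: corner_diff unit_in_corner geometric_sum_in_corner
                                  geometric_sum divisible_pow_uminus\<close>)

subsection \<open>Primitive corners are local\<close>

lemma powers_primitive_relation:
  assumes s: "s \<in> C"
  obtains d n where "\<exists>k\<le>n. \<not> \<pi> dvd d k" "(\<Sum>k\<le>n. scale (d k) (cpow G e s k)) = 0"
proof -
  define n where "n = card (carrier G)"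
  have "card (carrier G) < card {..n}" by (simp add: n_def)
  then obtain c where c: "\<exists>k\<in>{..n}. c k \<noteq> 0"
      "\<forall>g\<in>carrier G. (\<Sum>k\<in>{..n}. c k * cpow G e s k g) = 0"
    using nontrivial_relation_if_card_less[OF finite_carrier, of "{..n}" "cpow G e s"] by blast
  then obtain k0 where k0: "k0 \<in> {..n}" "c k0 \<noteq> 0" by blast
  have "(\<Sum>k\<in>{..n}. c k * cpow G e s k g) = 0" for g
    using c(2) corner_outside[OF cpow_in_corner[OF s]] by (cases "g \<in> carrier G") simp_all
  then obtain d where d: "\<exists>k\<in>{..n}. \<not> \<pi> dvd d k" "\<forall>g. (\<Sum>k\<in>{..n}. d k * cpow G e s k g) = 0"
    using primitive_relation[where c=c and v="cpow G e s", OF uniformizer k0] by blast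
  have "(\<Sum>k\<le>n. scale (d k) (cpow G e s k)) = 0"
    using d(2) by (simp add: fun_eq_iff sum_fun_apply)
  then show ?thesis using that d(1) by blast
qed

lemma sum_cpow_split:
  fixes d :: "nat \<Rightarrow> 'o"
  assumes s: "s \<in> C" and a: "a \<le> n"
  defines "h \<equiv> \<Sum>k\<in>{Suc a..n}. scale (d k) (cpow G e s (k - Suc a))"
  shows "h \<in> C" and "M h s = M s h"
    and "(\<Sum>k\<le>n. scale (d k) (cpow G e s k))
          = (\<Sum>k<a. scale (d k) (cpow G e s k)) + M (cpow G e s a) (scale (d a) e + M s h)"
proof -
  define v where "v k = cpow G e s k" for k
  have vC: "v k \<in> C" for k unfolding v_def by (rule cpow_in_corner[OF s])
  show "h \<in> C" unfolding h_def by (intro corner_sum corner_scale cpow_in_corner s)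
  have vs: "M (v k) s = M s (v k)" for k unfolding v_def by (rule cpow_commute) (use s in auto)
  show "M h s = M s h"
    unfolding h_def v_def[symmetric]
    by (simp add: galg_mult_sum_left galg_mult_sum_right galg_mult_scale_left galg_mult_scale_right vs)
  have "M (v a) (M s (v (k - Suc a))) = v k" if k: "k \<in> {Suc a..n}" for k
  proof -
    have "M (v a) (M s (v (k - Suc a))) = v (a + Suc (k - Suc a))"
      unfolding v_def using cpow_add[OF s] by (metis cpow.simps(2))
    also have "a + Suc (k - Suc a) = k" using k by auto
    finally show ?thesis .
  qed
  then have high: "M (v a) (M s h) = (\<Sum>k\<in>{Suc a..n}. scale (d k) (v k))"
    unfolding h_def v_def[symmetric] by (simp add: galg_mult_sum_right galg_mult_scale_right)
  have "{..n} = {..<a} \<union> {a..n}" using a by auto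
  then have "(\<Sum>k\<le>n. scale (d k) (v k)) = (\<Sum>k<a. scale (d k) (v k)) + (\<Sum>k\<in>{a..n}. scale (d k) (v k))"
    by (simp add: sum.union_disjoint ivl_disj_int)
  also have "(\<Sum>k\<in>{a..n}. scale (d k) (v k)) = M (v a) (scale (d a) e + M s h)"
    using a by (simp add: sum.atLeast_Suc_atMost galg_mult_add_right galg_mult_scale_right unit_right vC high)
  finally show "(\<Sum>k\<le>n. scale (d k) (cpow G e s k))
      = (\<Sum>k<a. scale (d k) (cpow G e s k)) + M (cpow G e s a) (scale (d a) e + M s h)"
    unfolding v_def .
qed

lemma powers_relation_mod_pi:
  assumes s: "s \<in> C"
  obtains a u h where "a \<ge> 1" "u dvd 1" "h \<in> C" "M h s = M s h"
    "divisible_pow \<pi> 1 (M (cpow G e s a) (scale u e + M s h))"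
proof -
  obtain d n where d: "\<exists>k\<le>n. \<not> \<pi> dvd d k" and rel: "(\<Sum>k\<le>n. scale (d k) (cpow G e s k)) = 0"
    by (rule powers_primitive_relation[OF s])
  \<comment> \<open>a0 is the first coefficient that is a unit; the terms below it vanish modulo pi\<close>
  define a0 where "a0 = (LEAST k. k \<le> n \<and> \<not> \<pi> dvd d k)"
  have a0: "a0 \<le> n" "\<not> \<pi> dvd d a0"
    using LeastI_ex[of "\<lambda>k. k \<le> n \<and> \<not> \<pi> dvd d k"] d unfolding a0_def by auto
  have "\<pi> dvd d k" if "k < a0" for k
    using not_less_Least[of k "\<lambda>k. k \<le> n \<and> \<not> \<pi> dvd d k"] that a0(1) unfolding a0_def by auto
  then have low: "divisible_pow \<pi> 1 (\<Sum>k<a0. scale (d k) (cpow G e s k))"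
    unfolding divisible_pow_def sum_fun_apply by (auto intro!: dvd_sum)
  define h where "h = (\<Sum>k\<in>{Suc a0..n}. scale (d k) (cpow G e s (k - Suc a0)))"
  note split = sum_cpow_split[OF s a0(1), of d, folded h_def]
  have "(\<Sum>k<a0. scale (d k) (cpow G e s k)) + M (cpow G e s a0) (scale (d a0) e + M s h) = 0"
    using rel split(3) by metis
  then have "M (cpow G e s a0) (scale (d a0) e + M s h) = - (\<Sum>k<a0. scale (d k) (cpow G e s k))"
    by (simp only: add_eq_0_iff)
  then have "divisible_pow \<pi> 1 (M (cpow G e s a0) (scale (d a0) e + M s h))"
    using low by (simp add: divisible_pow_uminus)
  then have "divisible_pow \<pi> 1 (M (cpow G e s (Suc a0)) (scale (d a0) e + M s h))"
    using divisible_pow_galg_mult_right[of \<pi> 1 _ s] by (simp add: M_assoc)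
  moreover have "d a0 dvd 1" by (rule unit_if_not_dvd_uniformizer[OF uniformizer a0(2)])
  moreover have "Suc a0 \<ge> 1" by simp
  ultimately show ?thesis using that split(1,2) by blast
qed

lemma idempotent_if_approximated:
  assumes f: "\<And>n. divisible_pow \<pi> n (f - y n)"
    and y: "\<And>n. divisible_pow \<pi> (Suc n) (M (y n) (y n) - y n)"
  shows "M f f = f"
proof (rule eq_if_divisible_all)
  fix n
  have "M f f - f = M f (f - y n) + M (f - y n) (y n) - (f - y n) + (M (y n) (y n) - y n)"
    by (simp add: galg_mult_diff_left galg_mult_diff_right algebra_simps)
  then show "divisible_pow \<pi> n (M f f - f)"
    by (simp only:) (intro divisible_pow_add divisible_pow_diff divisible_pow_galg_mult_right
        divisible_pow_galg_mult_left f divisible_pow_mono[OF le_SucI[OF le_refl] y])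
qed

lemma lift_idempotent:
  assumes x: "x \<in> C" and dx: "divisible_pow \<pi> 1 (M x x - x)"
  obtains f where "f \<in> C" "M f f = f" "divisible_pow \<pi> 1 (f - x)"
proof -
  \<comment> \<open>Newton iteration y \<mapsto> 3y^2 - 2y^3 doubles the pi-adic order of y^2 - y\<close>
  define \<phi> :: "('a \<Rightarrow> 'o) \<Rightarrow> ('a \<Rightarrow> 'o)" where "\<phi> y = M y y + M y y + M y y - M y (M y y) - M y (M y y)" for y
  define p :: "('a \<Rightarrow> 'o) \<Rightarrow> ('a \<Rightarrow> 'o)" where "p y = M y y - y" for y
  have \<phi>C: "\<phi> y \<in> C" if "y \<in> C" for y unfolding \<phi>_def using that by (intro corner_add corner_diff corner_mult)
  have step: "\<phi> y - y = M (p y) (e - y - y)" if y: "y \<in> C" for y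
    using CR.idempotent_lifting_identities(1)[of y] y unfolding \<phi>_def p_def
    by (simp only: galg_ring_simps corner_a_minus corner_add corner_diff corner_mult unit_in_corner simp_thms)
  have defect: "p (\<phi> y) = M (M (p y) (p y)) (p y + p y + p y + p y - e - e - e)" if y: "y \<in> C" for y
    using CR.idempotent_lifting_identities(2)[of y] y unfolding \<phi>_def p_def
    by (simp only: galg_ring_simps corner_a_minus corner_add corner_diff corner_mult unit_in_corner simp_thms)
  define it where "it n = (\<phi> ^^ n) x" for n
  have itS: "it (Suc n) = \<phi> (it n)" for n by (simp add: it_def)
  have itC: "it n \<in> C" for n by (induction n) (auto simp: it_def x \<phi>C)
  have p_small: "divisible_pow \<pi> (Suc n) (p (it n))" for n
  proof (induction n)
    case 0 then show ?case using dx by (simp add: it_def p_def fun_diff_def)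
  next
    case (Suc n)
    have "divisible_pow \<pi> (Suc (Suc n)) (M (p (it n)) (p (it n)))"
      by (rule divisible_pow_mono[OF _ divisible_pow_galg_mult[OF Suc.IH Suc.IH]]) simp
    then show ?case unfolding itS defect[OF itC] by (rule divisible_pow_galg_mult_left)
  qed
  have cauchy: "divisible_pow \<pi> (Suc n) (it (Suc n) - it n)" for n
    using step[OF itC[of n]] p_small[of n] by (simp add: itS divisible_pow_galg_mult_left)
  obtain f where f: "f \<in> C" "\<And>n. divisible_pow \<pi> n (f - it n)"
    using corner_complete[of it] itC cauchy divisible_pow_mono[OF le_SucI[OF le_refl]] by metis
  have "M f f = f"
    by (rule idempotent_if_approximated[OF f(2)]) (use p_small in \<open>simp add: p_def\<close>)
  moreover have "divisible_pow \<pi> 1 (f - x)"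
  proof -
    have "f - x = (f - it (Suc 0)) + (it (Suc 0) - it 0)" by (simp add: it_def)
    moreover have "divisible_pow \<pi> 1 (it (Suc 0) - it 0)" using cauchy[of 0] by simp
    moreover have "divisible_pow \<pi> 1 (f - it (Suc 0))" using f(2)[of 1] by simp
    ultimately show ?thesis by (metis divisible_pow_add)
  qed
  ultimately show ?thesis using that f(1) by blast
qed

lemma power_regular_mod_pi:
  assumes s: "s \<in> C"
  obtains a m where "a \<ge> 1" "m \<in> C" "M m s = M s m"
    "divisible_pow \<pi> 1 (cpow G e s a - M (M (cpow G e s a) (cpow G e s a)) m)"
proof -
  obtain a u h where a: "a \<ge> 1" and u: "u dvd 1" and h: "h \<in> C" "M h s = M s h"
    and rel: "divisible_pow \<pi> 1 (M (cpow G e s a) (scale u e + M s h))"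
    using powers_relation_mod_pi[OF s] by blast
  obtain v where uv: "u * v = 1" using u by (metis dvdE)
  define S where "S = cpow G e s a"
  have S: "S \<in> C" unfolding S_def using cpow_in_corner s by blast
  \<comment> \<open>normalise the unit u to 1: then S (e + t) = 0 mod pi with t = s h / u\<close>
  define t where "t = M s (scale v h)"
  have t: "t \<in> C" unfolding t_def using s h by (intro corner_mult corner_scale)
  have "M S (e + t) = scale v (M S (scale u e + M s h))"
    by (rule ext) (simp add: S_def t_def galg_mult_add_right galg_mult_scale_right unit_right
        cpow_in_corner s distrib_left mult.assoc[symmetric] uv mult.commute[of v u])
  then have St: "divisible_pow \<pi> 1 (M S (e + t))" using rel by (simp add: S_def divisible_pow_scale)
  \<comment> \<open>with m = (- h / u)^a we get S m = (- t)^a, and e - (- t)^a is a multiple of e + t\<close>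
  define m where "m = cpow G e (- scale v h) a"
  have mh: "- scale v h \<in> C" "M (- scale v h) s = M s (- scale v h)"
    using h by (simp_all add: corner_uminus corner_scale galg_mult_uminus_left galg_mult_uminus_right
        galg_mult_scale_left galg_mult_scale_right)
  have m: "m \<in> C" unfolding m_def using mh cpow_in_corner by blast
  have ms: "M m s = M s m" unfolding m_def by (rule cpow_commute) (use mh s in auto)
  have "cpow G e (- t) a = M S m"
    unfolding t_def S_def m_def galg_mult_uminus_right[symmetric] by (rule cpow_mult_distrib) (use s mh in auto)
  then have "e - M S m = M (e + t) (\<Sum>k<a. cpow G e (- t) k)"
    using geometric_sum(1)[of "- t" a] t by (simp add: corner_uminus)
  then have "M S (e - M S m) = M S (M (e + t) (\<Sum>k<a. cpow G e (- t) k))" by simp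
  then have "S - M (M S S) m = M (M S (e + t)) (\<Sum>k<a. cpow G e (- t) k)"
    by (simp add: galg_mult_diff_right unit_right S M_assoc)
  then have "divisible_pow \<pi> 1 (S - M (M S S) m)"
    using St by (simp add: divisible_pow_galg_mult_left)
  then show ?thesis using that a m ms unfolding S_def by blast
qed

lemma unit_if_power_multiple_unit_mod_pi:
  assumes s: "s \<in> C" and m: "m \<in> C" "M m s = M s m" and a: "a \<ge> 1"
    and unit: "divisible_pow \<pi> 1 (M (cpow G e s a) m - e)"
  shows "s \<in> Units R"
proof -
  obtain j where j: "a = Suc j" using a by (metis Suc_pred' less_le_trans zero_less_one)
  have sj: "M (cpow G e s j) s = M s (cpow G e s j)" by (rule cpow_commute) (use s in auto)
  have st: "M s (M (cpow G e s j) m) = M (cpow G e s a) m" unfolding j by (simp add: M_assoc)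
  have ts: "M (M (cpow G e s j) m) s = M (cpow G e s a) m"
    unfolding j using m(2) sj by (simp add: M_assoc) (simp flip: M_assoc)
  show ?thesis
    by (rule unit_if_unit_mod_pi[OF s corner_mult[OF cpow_in_corner[OF s, of j] m(1)]])
       (simp_all only: st ts unit)
qed

lemma unit_or_complement_unit:
  assumes triv: "\<And>f. f \<in> C \<Longrightarrow> M f f = f \<Longrightarrow> f = 0 \<or> f = e" and s: "s \<in> C"
  shows "s \<in> Units R \<or> e - s \<in> Units R"
proof -
  obtain a m where a: "a \<ge> 1" and m: "m \<in> C" "M m s = M s m"
    and reg: "divisible_pow \<pi> 1 (cpow G e s a - M (M (cpow G e s a) (cpow G e s a)) m)"
    using power_regular_mod_pi[OF s] by blast
  define S where "S = cpow G e s a"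
  have S: "S \<in> C" unfolding S_def using cpow_in_corner s by blast
  have mS: "M m S = M S m" unfolding S_def using cpow_commute[OF s m(1) m(2)[symmetric]] by simp
  \<comment> \<open>E = s^a m is idempotent modulo pi, and so lifts to an idempotent f, which is trivial\<close>
  define E where "E = M S m"
  have E: "E \<in> C" unfolding E_def by (rule corner_mult[OF S m(1)])
  have "M E E = M S (M (M m S) m)" unfolding E_def by (simp add: M_assoc)
  also have "\<dots> = M (M (M S S) m) m" by (simp add: mS M_assoc)
  finally have "M E E - E = M (M (M S S) m - S) m"
    by (simp add: galg_mult_diff_left E_def)
  then have "divisible_pow \<pi> 1 (M E E - E)"
    using divisible_pow_galg_mult_left[OF divisible_pow_diff_commute[OF reg]] by (simp add: S_def)
  then obtain f where f: "f \<in> C" "M f f = f" "divisible_pow \<pi> 1 (f - E)"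
    using lift_idempotent[OF E] by blast
  from triv[OF f(1,2)] show ?thesis
  proof
    assume "f = 0"
    then have "divisible_pow \<pi> 1 E" using f(3) divisible_pow_uminus by fastforce
    moreover have "S = (S - M (M S S) m) + M S E" unfolding E_def by (simp add: M_assoc)
    ultimately have "divisible_pow \<pi> 1 S"
      using reg divisible_pow_galg_mult_right unfolding S_def by (metis divisible_pow_add)
    then show ?thesis using unit_if_nilpotent_mod_pi[OF s] unfolding S_def by blast
  next
    assume "f = e"
    then have "divisible_pow \<pi> 1 (M (cpow G e s a) m - e)"
      using f(3) by (simp add: divisible_pow_diff_commute E_def S_def)
    then show ?thesis using unit_if_power_multiple_unit_mod_pi[OF s m a] by blast
  qed
qed

definition conjugates :: "('a \<Rightarrow> 'o) \<Rightarrow> ('a \<Rightarrow> 'o) set" where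
  "conjugates i = {M (M u i) v | u v. u \<in> C \<and> v \<in> C \<and> M u v = e \<and> M v u = e}"

lemma conjugates_self: "i \<in> C \<Longrightarrow> i \<in> conjugates i"
  unfolding conjugates_def using unit_in_corner e_idem by (force simp: unit_left unit_right)

lemma conjugates_trans:
  assumes "i \<in> conjugates i0" and "i' \<in> conjugates i"
  shows "i' \<in> conjugates i0"
proof -
  obtain u v where uv: "u \<in> C" "v \<in> C" "M u v = e" "M v u = e" and i: "i = M (M u i0) v"
    using assms(1) unfolding conjugates_def by blast
  obtain u' v' where uv': "u' \<in> C" "v' \<in> C" "M u' v' = e" "M v' u' = e" and i': "i' = M (M u' i) v'"
    using assms(2) unfolding conjugates_def by blast
  have "i' = M (M (M u' u) i0) (M v v')" unfolding i' i by (simp add: M_assoc)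
  moreover have "M (M u' u) (M v v') = M u' (M (M u v) v')" by (simp only: M_assoc)
  then have "M (M u' u) (M v v') = e" using uv uv' by (simp add: unit_left)
  moreover have "M (M v v') (M u' u) = M v (M (M v' u') u)" by (simp only: M_assoc)
  then have "M (M v v') (M u' u) = e" using uv uv' by (simp add: unit_left)
  ultimately show ?thesis
    unfolding conjugates_def using uv(1,2) uv'(1,2) corner_mult by blast
qed

lemma conjugation_mult:
  assumes u: "u \<in> C" and vu: "M v u = e" and x: "x \<in> C"
  shows "M (M (M u x) v) (M (M u y) v) = M (M u (M x y)) v"
proof -
  have "M (M (M u x) v) (M (M u y) v) = M u (M (M x (M v u)) (M y v))" by (simp add: M_assoc)
  then show ?thesis using vu x by (simp add: unit_right M_assoc)
qed

lemma conjugation_cancel: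
  assumes uv: "M u v = e" and x: "x \<in> C"
  shows "M (M u (M (M v x) u)) v = x"
proof -
  have "M (M u (M (M v x) u)) v = M (M u v) (M x (M u v))" by (simp add: M_assoc)
  then show ?thesis using uv x by (simp add: unit_left unit_right)
qed

lemma prim_idem_conjugate:
  assumes p: "prim_idem G C i0" and i: "i \<in> conjugates i0"
  shows "prim_idem G C i"
proof -
  obtain u v where uv: "u \<in> C" "v \<in> C" "M u v = e" "M v u = e" and i_def: "i = M (M u i0) v"
    using i unfolding conjugates_def by blast
  note i0 = prim_idemD[OF p]
  \<comment> \<open>conjugating back by v u gives i0 again, so a splitting of i would split i0\<close>
  have reverse: "M (M v x) u \<in> C" "M (M v x) u = i0 \<longleftrightarrow> x = i" if "x \<in> C" for x
    using that uv i0(1) conjugation_cancel[OF uv(3)] conjugation_cancel[OF uv(4)]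
    by (auto simp: i_def corner_mult unit_left unit_right)
  have "i \<in> C" "M i i = i" unfolding i_def using uv i0 by (simp_all add: corner_mult conjugation_mult)
  moreover have "i \<noteq> 0" using reverse(2)[OF zero_in_corner] i0(3) by auto
  moreover have "False"
    if e12: "e1 \<in> C" "e2 \<in> C" "M e1 e1 = e1" "M e2 e2 = e2" "e1 \<noteq> 0" "e2 \<noteq> 0"
      "M e1 e2 = 0" "M e2 e1 = 0" "i = e1 + e2" for e1 e2
  proof -
    define f where "f x = M (M v x) u" for x
    have "f e1 \<noteq> 0" "f e2 \<noteq> 0"
      using conjugation_cancel[OF uv(3), of e1] conjugation_cancel[OF uv(3), of e2] e12
      by (auto simp: f_def)
    moreover have "M (f e1) (f e1) = f e1" "M (f e2) (f e2) = f e2" "M (f e1) (f e2) = 0" "M (f e2) (f e1) = 0"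
      using e12 uv by (simp_all add: f_def conjugation_mult)
    moreover have "i0 = f e1 + f e2"
      using reverse(2)[of i] uv i0 \<open>i \<in> C\<close> e12(9)
      by (simp add: f_def galg_mult_add_left galg_mult_add_right)
    ultimately show False using p reverse(1) e12 unfolding prim_idem_iff f_def by blast
  qed
  ultimately show ?thesis unfolding prim_idem_iff by blast
qed

end

lemma (in corner_algebra) corner_algebra_of_idempotent:
  assumes "i \<in> C" and "M i i = i"
  shows "corner_algebra G H i \<pi>"
  unfolding corner_algebra_def corner_algebra_axioms_def
  using assms group_axioms finite_carrier subgroup_H uniformizer complete by (auto simp: corner_def)

context corner_algebra begin

lemma corner_of_idempotent_subset:
  assumes i: "i \<in> C"
  shows "corner G H i \<subseteq> C"
proof
  fix x assume x: "x \<in> corner G H i"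
  then have xi: "M i x = x" "M x i = x" by (simp_all add: corner_def)
  have "M e x = M (M e i) x" "M x e = M x (M i e)"
    by (simp only: M_assoc xi(1), simp only: M_assoc[symmetric] xi(2))
  then have "M e x = x" "M x e = x" by (simp_all only: unit_left[OF i] unit_right[OF i] xi)
  then show "x \<in> C" using x by (simp add: corner_def)
qed

lemma corner_idempotents_trivial:
  assumes p: "prim_idem G C i" and f: "f \<in> corner G H i" and ff: "M f f = f"
  shows "f = 0 \<or> f = i"
proof (rule ccontr)
  assume ne: "\<not> (f = 0 \<or> f = i)"
  note i = prim_idemD(1,2)[OF p]
  have fC: "f \<in> C" using f corner_of_idempotent_subset[OF i(1)] by blast
  have if1: "M i f = f" "M f i = f" using f by (auto simp: corner_def)
  have "i - f \<in> C" "M (i - f) (i - f) = i - f" "M f (i - f) = 0" "M (i - f) f = 0"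
    using fC i if1 ff by (simp_all add: corner_diff galg_mult_diff_left galg_mult_diff_right)
  moreover have "i - f \<noteq> 0" "i = f + (i - f)" using ne by auto
  ultimately show False using p fC ff ne unfolding prim_idem_iff by blast
qed

lemma conjugate_below_summand:
  assumes p: "prim_idem G C i" and j1: "j1 \<in> C" "M j1 j1 = j1" and j2: "j2 \<in> C" "M j2 j2 = j2"
    and sum: "M (j1 + j2) i = i"
  shows "\<exists>i'\<in>conjugates i. (M i' j1 = i' \<and> M j1 i' = i') \<or> (M i' j2 = i' \<and> M j2 i' = i')"
proof -
  note i = prim_idemD(1,2)[OF p]
  interpret ci: corner_algebra G H i \<pi> by (rule corner_algebra_of_idempotent[OF i])
  have sub: "corner G H i \<subseteq> C" by (rule corner_of_idempotent_subset[OF i(1)])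
  have in_corner: "M (M i j) i \<in> corner G H i" if j: "j \<in> C" for j
  proof -
    have "M (M i j) i \<in> C" using i j by (simp add: corner_mult)
    moreover have "M i (M (M i j) i) = M (M i j) i" "M (M (M i j) i) i = M (M i j) i"
      by (simp only: M_assoc[symmetric] i(2), simp only: M_assoc i(2))
    ultimately show ?thesis by (simp add: corner_def)
  qed
  have below: "\<exists>i'\<in>conjugates i. M i' ja = i' \<and> M ja i' = i'"
    if ja: "ja \<in> C" "M ja ja = ja" and jb: "jb \<in> C" and sum: "M (ja + jb) i = i"
      and unit: "M (M i ja) i \<in> Units (galg_ring G (corner G H i) i)" for ja jb
  proof -
    obtain y where y: "y \<in> corner G H i" "M y (M (M i ja) i) = i" "M (M (M i ja) i) y = i"
      using unit by (auto simp: Units_def)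
    have yC: "y \<in> C" using y(1) sub by blast
    have iy: "M i y = y" "M y i = y" using y(1) by (simp_all add: corner_def)
    have "\<exists>u\<in>carrier R. \<exists>v\<in>carrier R. u \<otimes>\<^bsub>R\<^esub> v = \<one>\<^bsub>R\<^esub> \<and> v \<otimes>\<^bsub>R\<^esub> u = \<one>\<^bsub>R\<^esub> \<and>
        ja \<otimes>\<^bsub>R\<^esub> (u \<otimes>\<^bsub>R\<^esub> i \<otimes>\<^bsub>R\<^esub> v) = u \<otimes>\<^bsub>R\<^esub> i \<otimes>\<^bsub>R\<^esub> v \<and>
        (u \<otimes>\<^bsub>R\<^esub> i \<otimes>\<^bsub>R\<^esub> v) \<otimes>\<^bsub>R\<^esub> ja = u \<otimes>\<^bsub>R\<^esub> i \<otimes>\<^bsub>R\<^esub> v"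
      by (rule CR.conjugate_idempotent_below[of i ja jb y]) (use i ja jb yC iy y sum in simp_all)
    then show ?thesis unfolding conjugates_def galg_ring_simps by blast
  qed
  have "i - M (M i j1) i = M (M i j2) i"
  proof -
    have "M (M i (j1 + j2)) i = i" using sum i by (simp add: M_assoc)
    then show ?thesis by (simp add: galg_mult_add_left galg_mult_add_right algebra_simps)
  qed
  moreover have "M (j2 + j1) i = i" using sum by (simp add: add.commute)
  moreover have "M (M i j1) i \<in> Units ci.R \<or> i - M (M i j1) i \<in> Units ci.R"
    by (rule ci.unit_or_complement_unit[OF corner_idempotents_trivial[OF p] in_corner[OF j1(1)]])
  ultimately show ?thesis using below[OF j1 j2(1) sum] below[OF j2 j1(1)] by metis
qed

lemma primitive_refinement:
  assumes B: "B \<subseteq> C" and e0: "prim_idem G C e0"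
    and "finite F" "F \<subseteq> B" "orthogonal_idems G F" "j \<in> F"
    and "i \<in> conjugates e0" "M i j = i" "M j i = i"
  shows "\<exists>j'. prim_idem G B j' \<and> (\<exists>i'\<in>conjugates e0. M i' j' = i' \<and> M j' i' = i')"
  using assms(3-)
proof (induction F arbitrary: j i rule: measure_induct_rule[where f="\<lambda>F. card (carrier G) - card F"])
  case (less F)
  note F = less.prems(1-3) and j = less.prems(4) and i = less.prems(5-7)
  show ?case
  proof (cases "prim_idem G B j")
    case True
    then show ?thesis using i by blast
  next
    case False
    have "j \<in> B" "M j j = j" "j \<noteq> 0" using F j by (auto simp: orthogonal_idems_def)
    then obtain j1 j2 where j12: "j1 \<in> B" "j2 \<in> B" "M j1 j1 = j1" "M j2 j2 = j2" "j1 \<noteq> 0" "j2 \<noteq> 0"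
        "M j1 j2 = 0" "M j2 j1 = 0" "j = j1 + j2"
      using False unfolding prim_idem_iff by blast
    have "M (j1 + j2) i = i" using i(3) unfolding j12(9) .
    then obtain i' where i': "i' \<in> conjugates i"
        and "(M i' j1 = i' \<and> M j1 i' = i') \<or> (M i' j2 = i' \<and> M j2 i' = i')"
      using conjugate_below_summand[OF prim_idem_conjugate[OF e0 i(1)]] j12(1-4) B by blast
    then obtain jk where jk: "jk \<in> {j1, j2}" "M i' jk = i'" "M jk i' = i'" by blast
    \<comment> \<open>the refined family is larger, but never larger than card G\<close>
    define F' where "F' = insert j1 (insert j2 (F - {j}))"
    note split = orthogonal_idems_split[OF finite_carrier F(3) j j12(3,5,4,6,7,8,9)]
    have F': "finite F'" "F' \<subseteq> B" "orthogonal_idems G F'"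
      using F(1,2) j12(1,2) split(1) unfolding F'_def by auto
    have "card F' = Suc (card F)"
      using F(1) split(2-4) card.remove[OF F(1) j] unfolding F'_def by (simp add: card_insert_if)
    moreover have "card F' \<le> card (carrier G)"
      using card_orthogonal_idems_le[OF finite_carrier F'(1) _ F'(3)] F'(2) B corner_galg by blast
    ultimately have "card (carrier G) - card F' < card (carrier G) - card F" by simp
    moreover have "jk \<in> F'" using jk(1) unfolding F'_def by blast
    ultimately show ?thesis
      using less.IH F' conjugates_trans[OF i(1) i'] jk(2,3) by blast
  qed
qed

lemma conjugate_below_primitive_of_subset:
  assumes B: "B \<subseteq> C" "e \<in> B" and e0: "prim_idem G C e0"
  obtains j i where "prim_idem G B j" "i \<in> conjugates e0" "M i j = i" "M j i = i"
proof -
  have e0C: "e0 \<in> C" using prim_idemD(1)[OF e0] .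
  have "e \<noteq> 0" using unit_left[OF e0C] prim_idemD(3)[OF e0] by auto
  have "\<exists>j. prim_idem G B j \<and> (\<exists>i\<in>conjugates e0. M i j = i \<and> M j i = i)"
    by (rule primitive_refinement[OF B(1) e0, where F="{e}" and j=e and i=e0])
       (use B(2) e_idem \<open>e \<noteq> 0\<close> e0C in
         \<open>auto simp: orthogonal_idems_def conjugates_self unit_left unit_right\<close>)
  then show ?thesis using that by blast
qed

lemma fixed_pts_block_subset_corner:
  assumes inv: "\<forall>g\<in>carrier G. gconj G g e = e"
  shows "fixed_pts G H {M x e | x. x \<in> S} \<subseteq> C"
proof
  fix z assume "z \<in> fixed_pts G H {M x e | x. x \<in> S}"
  then obtain x where z: "z = M x e" "\<forall>h\<in>H. gconj G h z = z" unfolding fixed_pts_def by blast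
  have "M z e = z" unfolding z(1) by (simp add: M_assoc e_idem)
  moreover have "M e z = M z e" by (rule galg_mult_commute_if_invariant[OF inv])
  ultimately show "z \<in> C" using z galg_mult_in_galg by (simp add: corner_def)
qed

lemma fixed_pts_block_algebra:
  assumes inv: "\<forall>g\<in>carrier G. gconj G g e = e"
  shows "fixed_pts G H {M x e | x. x \<in> galg G} = C"
proof
  show "C \<subseteq> fixed_pts G H {M x e | x. x \<in> galg G}"
  proof
    fix z assume z: "z \<in> C"
    then have "z = M z e" "z \<in> galg G" "\<forall>h\<in>H. gconj G h z = z"
      by (simp_all add: unit_right corner_galg corner_fixed)
    then show "z \<in> fixed_pts G H {M x e | x. x \<in> galg G}" unfolding fixed_pts_def by blast
  qed
qed (rule fixed_pts_block_subset_corner[OF inv])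

end

theorem lemma2p4:
  fixes \<pi> :: "'o::{idom, ring_char_0}" and p :: nat
    and G :: "('g,'m) monoid_scheme" and N H :: "'g set" and b :: "'g \<Rightarrow> 'o"
    and \<alpha>h :: "('g \<Rightarrow> 'o) set"
  assumes "dvr_uniformizer \<pi>" and "pi_adically_complete \<pi>"
    and "Factorial_Ring.prime p" and "\<pi> dvd of_nat p"
    and "group G" and "finite (carrier G)" and "N \<lhd> G"
    and "is_block G N b"
    and "\<forall>g\<in>carrier G. gconj G g b = b"
    and "subgroup H G"
    and "\<alpha>h \<in> points G H {galg_mult G x b | x. x \<in> galg G} b"
  shows "\<exists>\<alpha> \<in> points G H {galg_mult G x b | x. x \<in> galg_on N} b.
           \<exists>ih\<in>\<alpha>h. \<exists>j\<in>\<alpha>. galg_mult G ih j = ih \<and> galg_mult G j ih = ih"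
proof -
  interpret group G by fact
  note b_prim = prim_idemD[OF assms(8)[unfolded is_block_def]]
  have b: "b \<in> galg_on N" "galg_mult G b b = b" "b \<noteq> 0"
    using b_prim unfolding center_of_def by blast+
  have "b \<in> galg G" using b(1) galg_on_subset_galg[OF normal_imp_subgroup[OF assms(7)]] by blast
  moreover have "\<forall>h\<in>H. gconj G h b = b" using assms(9,10) subgroup.subset by blast
  ultimately interpret corner_algebra G H b \<pi>
    unfolding corner_algebra_def corner_algebra_axioms_def
    using assms(1,2,5,6,10) b(2) by blast
  define B where "B = fixed_pts G H {M x b | x. x \<in> galg_on N}"
  have BC: "B \<subseteq> C" unfolding B_def by (rule fixed_pts_block_subset_corner[OF assms(9)])
  have "b \<in> {M x b | x. x \<in> galg_on N}" using b(1) b(2)[symmetric] by blast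
  then have bB: "b \<in> B" unfolding B_def fixed_pts_def using \<open>\<forall>h\<in>H. gconj G h b = b\<close> by blast
  obtain e0 where e0: "prim_idem G C e0" and \<alpha>h: "\<alpha>h = conjugates e0"
    using assms(11) unfolding points_def fixed_pts_block_algebra[OF assms(9)] conjugates_def by blast
  obtain j i where j: "prim_idem G B j" and i: "i \<in> conjugates e0" "M i j = i" "M j i = i"
    using conjugate_below_primitive_of_subset[OF BC bB e0] .
  define \<alpha> where "\<alpha> = {M (M u j) v | u v. u \<in> B \<and> v \<in> B \<and> M u v = b \<and> M v u = b}"
  have "\<alpha> \<in> points G H {M x b | x. x \<in> galg_on N} b"
    unfolding points_def \<alpha>_def using j unfolding B_def by blast
  moreover have "j = M (M b j) b" using prim_idemD(1)[OF j] BC by (auto simp: unit_left unit_right)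
  then have "j \<in> \<alpha>" unfolding \<alpha>_def using bB b(2) by blast
  ultimately show ?thesis using i \<alpha>h by blast
qed

end
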